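(* Let $(\mathcal M,\mathcal E)$ be a MAC grid of $\Omega$, $i\in\{1,\dots,d\}$, and $\boldsymbol u,\boldsymbol v,\boldsymbol w\in\mathbf H_{\mathcal E,0}$. Then there exist, for each $j\in\{1,\dots,d\}$, reconstruction operators $(\mathcal R^{(i,j)}_{\widetilde{\mathcal E}})^v$ and $(\mathcal R^{(j,i)}_{\widetilde{\mathcal E}})^u$ (whose weights may depend on $\boldsymbol u$) such that $$b_{\mathcal E^{(i)}}(\boldsymbol u,v_i,w_i)=-\sum_{j=1}^d\int_\Omega(\mathcal R^{(i,j)}_{\widetilde{\mathcal E}})^v v_i\;(\mathcal R^{(j,i)}_{\widetilde{\mathcal E}})^u u_j\;\eth_jw_i\,d\boldsymbol x.$$
   Context: Let $d\in\{2,3\}$ and let $\Omega\subset\mathbb{R}^d$ be a bounded connected open set which is a finite union of rectangles ($d=2$) or rectangular parallelepipeds ($d=3$) whose faces are orthogonal to vectors of the canonical basis $(\boldsymbol e^{(1)},\dots,\boldsymbol e^{(d)})$. A MAC grid $(\mathcal M,\mathcal E)$ of $\Omega$ is given by a conforming structured partition $\mathcal M$ of $\Omega$ into possibly non-uniform rectangles ($d=2$) or rectangular parallelepipeds ($d=3$) with faces orthogonal to the basis vectors (the primal cells $K$, with mass centers $\boldsymbol x_K$), and the set $\mathcal E$ of all faces of these cells, split into interior faces $\mathcal E_{\rm int}$ and boundary faces $\mathcal E_{\rm ext}$ (those lying on $\partial\Omega$). For $i\in\{1,\dots,d\}$, $\mathcal E^{(i)}$ (resp. $\mathcal E^{(i)}_{\rm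 int}$, $\mathcal E^{(i)}_{\rm ext}$) is the set of faces (resp. interior, boundary faces) orthogonal to $\boldsymbol e^{(i)}$. For a face $\sigma$, $\boldsymbol x_\sigma$ is its mass center and $|\sigma|$ its $(d-1)$-dimensional measure ($|A|$ also denotes the $d$-dimensional measure of $A\subset\mathbb R^d$); $\mathcal E(K)$ is the set of faces of $K$ and $\boldsymbol n_{K,\sigma}$ the unit normal to $\sigma\in\mathcal E(K)$ outward $K$; we write $\sigma=K|L$ if $\sigma=\partial K\cap\partial L\in\mathcal E_{\rm int}$. For $\sigma\in\mathcal E(K)$, $D_{K,\sigma}$ is the half of $K$ adjacent to $\sigma$ (the part of $K$ between $\sigma$ and the hyperplane parallel to $\sigma$ through $\boldsymbol x_K$). The dual cell of $\sigma$ is $D_\sigma=D_{K,\sigma}\cup D_{L,\sigma}$ if $\sigma=K|L$ and $D_\sigma=D_{K,\sigma}$ if $\sigma\in\mathcal E_{\rm ext}\cap\mathcal E(K)$. For each $i$, $(D_\sigma)_{\sigma\in\mathcal E^{(i)}}$ is a partition of $\Omega$ (the $i$-th dual mesh); $\widetilde{\mathcal E}^{(i)}$ is the set of faces of this dual mesh, split into interior dual faces $\widetilde{\mathcal E}^{(i)}_{\rm int}$ (we write $\epsilon=\sigma|\sigma'$ for the face separating $D_\sigma$ and $D_{\sigma'}$) and boundary dual faces $\widetilde{\mathcal E}^{(i)}_{\rm ext}$ (lying on $\partial\Omega$); $\widetilde{\mathcal E}(D_\sigma)$ is the set of faces of $D_\sigma$. For $\sigma\in\mathcal E^{(i)}$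 and $\epsilon\in\widetilde{\mathcal E}(D_\sigma)$, $d_\epsilon=|\boldsymbol x_\sigma-\boldsymbol x_{\sigma'}|$ if $\epsilon=\sigma|\sigma'\in\widetilde{\mathcal E}^{(i)}_{\rm int}$, and $d_\epsilon$ is the Euclidean distance from $\boldsymbol x_\sigma$ to $\epsilon$ if $\epsilon\in\widetilde{\mathcal E}^{(i)}_{\rm ext}$. $H_{\mathcal E^{(i)},0}$ is the space of functions $u=\sum_{\sigma\in\mathcal E^{(i)}}u_\sigma\mathbf 1_{D_\sigma}$ with $u_\sigma=0$ for $\sigma\in\mathcal E^{(i)}_{\rm ext}$, and $\mathbf H_{\mathcal E,0}=\prod_{i=1}^d H_{\mathcal E^{(i)},0}$. Discrete velocity gradient: for $i,j\in\{1,\dots,d\}$, to each $\epsilon\in\widetilde{\mathcal E}^{(i)}$ orthogonal to $\boldsymbol e^{(j)}$ associate $D_\epsilon=\epsilon\times[\boldsymbol x_\sigma,\boldsymbol x_{\sigma'}]$ if $\epsilon=\sigma|\sigma'$ and $D_\epsilon=\epsilon\times[\boldsymbol x_\sigma,\boldsymbol x_{\sigma,\epsilon}]$ if $\epsilon\in\widetilde{\mathcal E}^{(i)}_{\rm ext}\cap\widetilde{\mathcal E}(D_\sigma)$, where $\boldsymbol x_{\sigma,\epsilon}$ is the orthogonal projection of $\boldsymbol x_\sigma$ on $\epsilon$; these $D_\epsilon$ form a partition of $\Omega$ (the $(i,j)$-partition; the $(i,j)$- and $(j,i)$-partitions coincide). An interior dual face orthogonal to $\boldsymbol e^{(j)}$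 is written $\epsilon=\overrightarrow{\sigma|\sigma'}$ when $(\boldsymbol x_{\sigma'}-\boldsymbol x_\sigma)\cdot\boldsymbol e^{(j)}>0$. For $u\in H_{\mathcal E^{(i)},0}$, $\eth_j u=\sum_{\epsilon}(\eth_ju)_{D_\epsilon}\mathbf 1_{D_\epsilon}$ (sum over $\epsilon\in\widetilde{\mathcal E}^{(i)}$, $\epsilon\perp\boldsymbol e^{(j)}$) with $(\eth_ju)_{D_\epsilon}=(u_{\sigma'}-u_\sigma)/d_\epsilon$ if $\epsilon=\overrightarrow{\sigma|\sigma'}$ and $(\eth_ju)_{D_\epsilon}=-u_\sigma\,(\boldsymbol x_{\sigma,\epsilon}-\boldsymbol x_\sigma)\cdot\boldsymbol e^{(j)}/d_\epsilon$ if $\epsilon\in\widetilde{\mathcal E}^{(i)}_{\rm ext}\cap\widetilde{\mathcal E}(D_\sigma)$. Discrete convection: for $\boldsymbol u\in\mathbf H_{\mathcal E,0}$ and $\sigma\in\mathcal E^{(i)}\cap\mathcal E(K)$ let $u_{K,\sigma}=u_\sigma\,\boldsymbol n_{K,\sigma}\cdot\boldsymbol e^{(i)}$. For $i\in\{1,\dots,d\}$, $\sigma\in\mathcal E^{(i)}_{\rm int}$ and $\epsilon\in\widetilde{\mathcal E}(D_\sigma)$, the mass flux $|\epsilon|u_{\sigma,\epsilon}$ is defined by: (a) if $\epsilon$ is orthogonal to $\boldsymbol e^{(i)}$, then $\epsilon\subset K$ with $\mathcal E^{(i)}\cap\mathcal E(K)=\{\sigma,\sigma'\}$ and $|\epsilon|u_{\sigma,\epsilon}=\frac12(-|\sigma|u_{K,\sigma}+|\sigma'|u_{K,\sigma'})$;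 (b) otherwise, with $\sigma=K|L$, $\epsilon$ is the union of halves of a face $\tau\in\mathcal E(K)$ and a face $\tau'\in\mathcal E(L)$, and $|\epsilon|u_{\sigma,\epsilon}=\frac12(|\tau|u_{K,\tau}+|\tau'|u_{L,\tau'})$ (this vanishes when $\epsilon\subset\partial\Omega$). For $v\in H_{\mathcal E^{(i)},0}$ and $\epsilon=\sigma|\sigma'$, $v^*_\epsilon$ is either the centred value $(v_\sigma+v_{\sigma'})/2$ or the upwind value ($v_\sigma$ if $u_{\sigma,\epsilon}\ge0$, $v_{\sigma'}$ otherwise); one of these two choices is fixed once for all. For $\boldsymbol u\in\mathbf H_{\mathcal E,0}$, $v,w\in H_{\mathcal E^{(i)},0}$: $b_{\mathcal E^{(i)}}(\boldsymbol u,v,w)=\sum_{\sigma\in\mathcal E^{(i)}_{\rm int}}w_\sigma\sum_{\epsilon\in\widetilde{\mathcal E}(D_\sigma)}|\epsilon|u_{\sigma,\epsilon}v^*_\epsilon$ (terms with $\epsilon\subset\partial\Omega$ vanish since the flux is zero), and $b_{\mathcal E}(\boldsymbol u,\boldsymbol v,\boldsymbol w)=\sum_{i=1}^db_{\mathcal E^{(i)}}(\boldsymbol u,v_i,w_i)$. Velocity reconstruction operators: for $i,j\in\{1,\dots,d\}$, a reconstruction operator $\mathcal R^{(i,j)}_{\widetilde{\mathcal E}}:H_{\mathcal E^{(i)},0}\to L^2(\Omega)$ is a map of the form $\mathcal R^{(i,j)}_{\widetilde{\mathcal E}}v=\sum_{\epsilon\in\widetilde{\mathcal E}^{(i)},\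 \epsilon\perp\boldsymbol e^{(j)}}(\mathcal R^{(i,j)}_{\widetilde{\mathcal E}}v)_{D_\epsilon}\mathbf 1_{D_\epsilon}$ (the $D_\epsilon$ being the cells of the $(i,j)$-partition) with $(\mathcal R^{(i,j)}_{\widetilde{\mathcal E}}v)_{D_\epsilon}=\alpha_\epsilon v_\sigma+(1-\alpha_\epsilon)v_{\sigma'}$ if $\epsilon=\sigma|\sigma'$ and $(\mathcal R^{(i,j)}_{\widetilde{\mathcal E}}v)_{D_\epsilon}=\alpha_\epsilon v_\sigma$ if $\epsilon\in\widetilde{\mathcal E}^{(i)}_{\rm ext}\cap\widetilde{\mathcal E}(D_\sigma)$, where the weights $\alpha_\epsilon\in[0,1]$ are arbitrary. *)

theory Defs
  imports "HOL-Analysis.Analysis"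
begin

text \<open>
  The space dimension d is CARD('n) (assumed to be 2 or 3 in the theorem);
  points of R^d are of type real^'n and the canonical basis vectors are indexed by 'n.
  The mesh is the restriction of a Cartesian (tensor product) grid to the union of a finite
  set C of primal cells: g k is the strictly increasing sequence of grid nodes in direction k,
  and the primal cell with multi-index m is the box prod_k [g k (m k), g k (m k + 1)].

  All geometric objects (cell centers, face mass centers, dual cell corners) are addressed by
  their "doubled" integer position q :: 'n => int: in direction k, an even value 2p refers to
  the node coordinate g k p and an odd value 2p+1 to the midpoint of [g k p, g k (p+1)].
  Hence a primal cell is an all-odd position, a face of E^(i) is a position which is even in
  direction i only, etc.
\<close>

definition half_coord :: "(int \<Rightarrow> real) \<Rightarrow> int \<Rightarrow> real" where
  "half_coord h q = (if even q then h (q div 2) else (h (q div 2) + h (q div 2 + 1)) / 2)"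

definition span :: "('n \<Rightarrow> int \<Rightarrow> real) \<Rightarrow> 'n \<Rightarrow> int \<Rightarrow> real" where
  "span g k q = half_coord (g k) (q + 1) - half_coord (g k) (q - 1)"

definition cell_set :: "('n::finite \<Rightarrow> int \<Rightarrow> real) \<Rightarrow> ('n \<Rightarrow> int) \<Rightarrow> (real^'n) set" where
  "cell_set g m = {x. \<forall>k. g k (m k) \<le> x$k \<and> x$k \<le> g k (m k + 1)}"

definition Omega :: "('n::finite \<Rightarrow> int \<Rightarrow> real) \<Rightarrow> ('n \<Rightarrow> int) set \<Rightarrow> (real^'n) set" where
  "Omega g C = interior (\<Union>m\<in>C. cell_set g m)"

definition MAC_grid :: "('n::finite \<Rightarrow> int \<Rightarrow> real) \<Rightarrow> ('n \<Rightarrow> int) set \<Rightarrow> bool" where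
  "MAC_grid g C \<longleftrightarrow> finite C \<and> C \<noteq> {} \<and> (\<forall>k. strict_mono (g k)) \<and> connected (Omega g C)"

definition is_cell :: "('n \<Rightarrow> int) set \<Rightarrow> ('n \<Rightarrow> int) \<Rightarrow> bool" where
  "is_cell C q \<longleftrightarrow> (\<forall>k. odd (q k)) \<and> (\<lambda>k. (q k - 1) div 2) \<in> C"

text \<open>Position p is the mass center of a face sigma in E^(i) (i.e. a face of some cell of the mesh),
  resp. of an interior face sigma in E^(i)_int (sigma = K|L with K, L cells of the mesh).\<close>
definition is_face :: "('n \<Rightarrow> int) set \<Rightarrow> 'n \<Rightarrow> ('n \<Rightarrow> int) \<Rightarrow> bool" where
  "is_face C i p \<longleftrightarrow> even (p i) \<and> (\<forall>k. k \<noteq> i \<longrightarrow> odd (p k)) \<and>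
     (is_cell C (p(i := p i - 1)) \<or> is_cell C (p(i := p i + 1)))"

definition int_face :: "('n \<Rightarrow> int) set \<Rightarrow> 'n \<Rightarrow> ('n \<Rightarrow> int) \<Rightarrow> bool" where
  "int_face C i p \<longleftrightarrow> even (p i) \<and> (\<forall>k. k \<noteq> i \<longrightarrow> odd (p k)) \<and>
     is_cell C (p(i := p i - 1)) \<and> is_cell C (p(i := p i + 1))"

text \<open>Discrete velocity fields in H_{E,0}: u i p is the value u_sigma of the i-th component at the
  face of E^(i) with center position p.  Values at boundary faces vanish; values at positions
  which are not faces of E^(i) are irrelevant and are normalised to 0.\<close>
definition H_E0 :: "('n \<Rightarrow> int) set \<Rightarrow> ('n \<Rightarrow> ('n \<Rightarrow> int) \<Rightarrow> real) set" where
  "H_E0 C = {u. \<forall>i p. \<not> int_face C i p \<longrightarrow> u i p = 0}"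

definition face_meas :: "('n::finite \<Rightarrow> int \<Rightarrow> real) \<Rightarrow> 'n \<Rightarrow> ('n \<Rightarrow> int) \<Rightarrow> real" where
  "face_meas g i p = (\<Prod>k\<in>UNIV - {i}. span g k (p k))"

text \<open>Measure |epsilon| of the face of the dual cell D_sigma (sigma with center position p)
  orthogonal to e^(j).\<close>
definition dface_meas :: "('n::finite \<Rightarrow> int \<Rightarrow> real) \<Rightarrow> 'n \<Rightarrow> ('n \<Rightarrow> int) \<Rightarrow> real" where
  "dface_meas g j p = (\<Prod>k\<in>UNIV - {j}. span g k (p k))"

text \<open>u_{K,sigma} = u_sigma n_{K,sigma}.e^(i) for sigma in E^(i) a face of K
  (K, sigma given by their center positions; (x_sigma - x_K).e^(i) has the sign of sigma i - K i).\<close>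
definition uK :: "('n \<Rightarrow> ('n \<Rightarrow> int) \<Rightarrow> real) \<Rightarrow> 'n \<Rightarrow> ('n \<Rightarrow> int) \<Rightarrow> ('n \<Rightarrow> int) \<Rightarrow> real" where
  "uK u i K \<sigma> = u i \<sigma> * sgn (of_int (\<sigma> i - K i))"

text \<open>Mass flux |epsilon| u_{sigma,epsilon} through the face epsilon of D_sigma
  (sigma in E^(i)_int with center position p) which is orthogonal to e^(j) and lies on side
  s in {-1,1} (in direction j) of x_sigma.\<close>
definition mflux :: "('n::finite \<Rightarrow> int \<Rightarrow> real) \<Rightarrow> ('n \<Rightarrow> ('n \<Rightarrow> int) \<Rightarrow> real) \<Rightarrow> 'n \<Rightarrow>
    ('n \<Rightarrow> int) \<Rightarrow> 'n \<Rightarrow> int \<Rightarrow> real" where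
  "mflux g u i p j s =
    (if j = i then
       (let K = p(i := p i + s); \<sigma>' = p(i := p i + 2 * s) in
        (- face_meas g i p * uK u i K p + face_meas g i \<sigma>' * uK u i K \<sigma>') / 2)
     else
       (let K = p(i := p i - 1); L = p(i := p i + 1);
            \<tau> = K(j := K j + s); \<tau>' = L(j := L j + s) in
        (face_meas g j \<tau> * uK u j K \<tau> + face_meas g j \<tau>' * uK u j L \<tau>') / 2))"

definition uflux :: "('n::finite \<Rightarrow> int \<Rightarrow> real) \<Rightarrow> ('n \<Rightarrow> ('n \<Rightarrow> int) \<Rightarrow> real) \<Rightarrow> 'n \<Rightarrow>
    ('n \<Rightarrow> int) \<Rightarrow> 'n \<Rightarrow> int \<Rightarrow> real" where
  "uflux g u i p j s = mflux g u i p j s / dface_meas g j p"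

text \<open>v^*_epsilon for epsilon = sigma|sigma' (sigma' = neighbour of sigma across epsilon);
  upw = True: upwind choice, upw = False: centred choice.\<close>
definition vstar :: "bool \<Rightarrow> ('n::finite \<Rightarrow> int \<Rightarrow> real) \<Rightarrow> ('n \<Rightarrow> ('n \<Rightarrow> int) \<Rightarrow> real) \<Rightarrow> 'n \<Rightarrow>
    (('n \<Rightarrow> int) \<Rightarrow> real) \<Rightarrow> ('n \<Rightarrow> int) \<Rightarrow> 'n \<Rightarrow> int \<Rightarrow> real" where
  "vstar upw g u i v p j s =
    (let \<sigma>' = p(j := p j + 2 * s) in
     if upw then (if uflux g u i p j s \<ge> 0 then v p else v \<sigma>')
     else (v p + v \<sigma>') / 2)"

definition b_E :: "bool \<Rightarrow> ('n::finite \<Rightarrow> int \<Rightarrow> real) \<Rightarrow> ('n \<Rightarrow> int) set \<Rightarrow> 'n \<Rightarrow>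
    ('n \<Rightarrow> ('n \<Rightarrow> int) \<Rightarrow> real) \<Rightarrow> (('n \<Rightarrow> int) \<Rightarrow> real) \<Rightarrow> (('n \<Rightarrow> int) \<Rightarrow> real) \<Rightarrow> real" where
  "b_E upw g C i u v w =
    (\<Sum>p\<in>{p. int_face C i p}. w p *
       (\<Sum>j\<in>UNIV. \<Sum>s\<in>{-1, 1}. mflux g u i p j s * vstar upw g u i v p j s))"

text \<open>Cells D_epsilon of the (i,j)-partition.  For i \<noteq> j they are indexed by the position q
  which is even exactly in directions i and j (midpoint of an edge of the primal mesh), for i = j
  by the cell centers (all-odd positions).  D_epsilon is (the part in Omega of) the closed box
  prod_k [half_coord (q k - 1), half_coord (q k + 1)]; it separates sigma = q - e^(j) and
  sigma' = q + e^(j) (faces of E^(i)).\<close>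
definition ij_pos :: "'n \<Rightarrow> 'n \<Rightarrow> ('n \<Rightarrow> int) \<Rightarrow> bool" where
  "ij_pos i j q \<longleftrightarrow> (\<forall>k. even (q k) \<longleftrightarrow> (i \<noteq> j \<and> (k = i \<or> k = j)))"

definition near_mesh :: "('n \<Rightarrow> int) set \<Rightarrow> ('n \<Rightarrow> int) \<Rightarrow> bool" where
  "near_mesh C q \<longleftrightarrow> (\<exists>m\<in>C. \<forall>k. 2 * m k \<le> q k \<and> q k \<le> 2 * m k + 2)"

definition ij_cells :: "('n \<Rightarrow> int) set \<Rightarrow> 'n \<Rightarrow> 'n \<Rightarrow> ('n \<Rightarrow> int) set" where
  "ij_cells C i j = {q. ij_pos i j q \<and> near_mesh C q}"

definition dbox :: "('n::finite \<Rightarrow> int \<Rightarrow> real) \<Rightarrow> ('n \<Rightarrow> int) \<Rightarrow> (real^'n) set" where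
  "dbox g q = {x. \<forall>k. half_coord (g k) (q k - 1) \<le> x$k \<and> x$k \<le> half_coord (g k) (q k + 1)}"

text \<open>Reconstruction operator R^{(i,j)} with weights alpha applied to v in H_{E^(i),0}.
  (For boundary dual faces the formula alpha v_sigma + (1-alpha) v_sigma' with v_sigma' = 0
  gives exactly the family of values alpha v_sigma, alpha in [0,1].)\<close>
definition recon :: "('n::finite \<Rightarrow> int \<Rightarrow> real) \<Rightarrow> ('n \<Rightarrow> int) set \<Rightarrow> 'n \<Rightarrow> 'n \<Rightarrow>
    (('n \<Rightarrow> int) \<Rightarrow> real) \<Rightarrow> (('n \<Rightarrow> int) \<Rightarrow> real) \<Rightarrow> real^'n \<Rightarrow> real" where
  "recon g C i j \<alpha> v = (\<lambda>x. \<Sum>q\<in>ij_cells C i j.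
      (\<alpha> q * v (q(j := q j - 1)) + (1 - \<alpha> q) * v (q(j := q j + 1))) * indicator (dbox g q) x)"

definition eth_val :: "('n::finite \<Rightarrow> int \<Rightarrow> real) \<Rightarrow> ('n \<Rightarrow> int) set \<Rightarrow> 'n \<Rightarrow> 'n \<Rightarrow>
    (('n \<Rightarrow> int) \<Rightarrow> real) \<Rightarrow> ('n \<Rightarrow> int) \<Rightarrow> real" where
  "eth_val g C i j v q =
    (let \<sigma> = q(j := q j - 1); \<sigma>' = q(j := q j + 1) in
     if is_face C i \<sigma> \<and> is_face C i \<sigma>' then
       (v \<sigma>' - v \<sigma>) / (half_coord (g j) (q j + 1) - half_coord (g j) (q j - 1))
     else if is_face C i \<sigma> then
       - v \<sigma> / (half_coord (g j) (q j) - half_coord (g j) (q j - 1))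
     else if is_face C i \<sigma>' then
       v \<sigma>' / (half_coord (g j) (q j + 1) - half_coord (g j) (q j))
     else 0)"

definition eth :: "('n::finite \<Rightarrow> int \<Rightarrow> real) \<Rightarrow> ('n \<Rightarrow> int) set \<Rightarrow> 'n \<Rightarrow> 'n \<Rightarrow>
    (('n \<Rightarrow> int) \<Rightarrow> real) \<Rightarrow> real^'n \<Rightarrow> real" where
  "eth g C i j v = (\<lambda>x. \<Sum>q\<in>ij_cells C i j. eth_val g C i j v q * indicator (dbox g q) x)"

end

theory Submission
  imports Defs
begin

(* Both sides are sums over the dual faces q of the i-th dual mesh orthogonal to e_j, i.e. over
   the cells D_q of the (i,j)-partition.  Regrouping b_E by dual faces, the two faces
   sigma = q - e_j and sigma' = q + e_j contribute F_q v*_q (w_sigma - w_sigma'), where F_q is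
   the mass flux through q; the centred or upwind value v*_q is a convex combination of v_sigma
   and v_sigma', which fixes the weights of the reconstruction of v.  On the right-hand side, D_q
   contributes R^v R^u (w_sigma' - w_sigma) |Omega \<inter> D_q| / d_q, so the weight of the
   reconstruction of u_j must make R^u |Omega \<inter> D_q| = F_q d_q.  If both values of u_j around q
   are nonzero, both faces q -+ e_i are interior, D_q lies in Omega and weights proportional to
   the face measures work.  If only one is nonzero, the half of D_q on its side lies in Omega,
   and this lower bound on |Omega \<inter> D_q| is exactly what keeps the required weight in [0,1]. *)

lemma half_coord_less_succ:
  assumes "strict_mono h"
  shows "half_coord h q < half_coord h (q + 1)"
proof -
  have step: "h (q div 2) < h (q div 2 + 1)" using assms by (simp add: strict_mono_def)
  show ?thesis
  proof (cases "even q")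
    case True
    then have "(q + 1) div 2 = q div 2" by presburger
    with True step show ?thesis by (simp add: half_coord_def)
  next
    case False
    then have "(q + 1) div 2 = q div 2 + 1" by presburger
    with False step show ?thesis by (simp add: half_coord_def)
  qed
qed

lemma strict_mono_half_coord:
  assumes "strict_mono h"
  shows "strict_mono (half_coord h)"
proof (rule strict_monoI)
  fix a b :: int
  assume "a < b"
  then show "half_coord h a < half_coord h b"
  proof (induction b rule: int_gr_induct)
    case base
    show ?case by (rule half_coord_less_succ[OF assms])
  next
    case (step b)
    then show ?case using half_coord_less_succ[OF assms, of b] by linarith
  qed
qed

lemma half_coord_mono: "strict_mono h \<Longrightarrow> a \<le> b \<Longrightarrow> half_coord h a \<le> half_coord h b"
  by (rule strict_mono_leD[OF strict_mono_half_coord])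

lemma span_pos: "strict_mono (g k) \<Longrightarrow> 0 < span g k q"
  unfolding span_def using strict_mono_half_coord[of "g k"] by (simp add: strict_mono_def)

lemma span_around_even:
  assumes "even c"
  shows "span g k (c - 1) = 2 * (half_coord (g k) c - half_coord (g k) (c - 1))"
    and "span g k (c + 1) = 2 * (half_coord (g k) (c + 1) - half_coord (g k) c)"
    and "span g k (c - 1) + span g k (c + 1) = 2 * span g k c"
proof -
  have "odd (c - 1)" "odd (c + 1)" "even (c - 2)" "even (c + 2)"
    and "(c - 1) div 2 = c div 2 - 1" "(c - 2) div 2 = c div 2 - 1"
    and "(c + 1) div 2 = c div 2" "(c + 2) div 2 = c div 2 + 1"
    using assms by presburger+
  then have hc: "half_coord (g k) (c - 1) = (g k (c div 2 - 1) + g k (c div 2)) / 2"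
      "half_coord (g k) (c + 1) = (g k (c div 2) + g k (c div 2 + 1)) / 2"
      "half_coord (g k) (c - 2) = g k (c div 2 - 1)" "half_coord (g k) (c + 2) = g k (c div 2 + 1)"
      "half_coord (g k) c = g k (c div 2)"
    using assms by (simp_all add: half_coord_def)
  have shift: "c - 1 - 1 = c - 2" "c + 1 + 1 = c + 2" by simp_all
  show "span g k (c - 1) = 2 * (half_coord (g k) c - half_coord (g k) (c - 1))"
    and "span g k (c + 1) = 2 * (half_coord (g k) (c + 1) - half_coord (g k) c)"
    and "span g k (c - 1) + span g k (c + 1) = 2 * span g k c"
    unfolding span_def shift diff_add_cancel add_diff_cancel hc by (simp_all add: field_simps)
qed

definition dbox_lo :: "('n::finite \<Rightarrow> int \<Rightarrow> real) \<Rightarrow> ('n \<Rightarrow> int) \<Rightarrow> real^'n" where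
  "dbox_lo g q = (\<chi> k. half_coord (g k) (q k - 1))"

definition dbox_hi :: "('n::finite \<Rightarrow> int \<Rightarrow> real) \<Rightarrow> ('n \<Rightarrow> int) \<Rightarrow> real^'n" where
  "dbox_hi g q = (\<chi> k. half_coord (g k) (q k + 1))"

lemma dbox_eq_cbox: "dbox g q = cbox (dbox_lo g q) (dbox_hi g q)"
  by (auto simp: dbox_def mem_box_cart dbox_lo_def dbox_hi_def)

lemma dbox_lo_le_hi: "\<forall>k. strict_mono (g k) \<Longrightarrow> dbox_lo g q $ k \<le> dbox_hi g q $ k"
  by (simp add: dbox_lo_def dbox_hi_def half_coord_mono)

lemma dbox_cell_subset:
  assumes "is_cell C c"
  shows "dbox g c \<subseteq> (\<Union>m\<in>C. cell_set g m)"
proof -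
  have nodes: "half_coord h (c k - 1) = h ((c k - 1) div 2)"
    "half_coord h (c k + 1) = h ((c k - 1) div 2 + 1)" for h k
  proof -
    have "odd (c k)" using assms by (simp add: is_cell_def)
    then have "even (c k - 1)" "even (c k + 1)" "(c k + 1) div 2 = (c k - 1) div 2 + 1" by presburger+
    then show "half_coord h (c k - 1) = h ((c k - 1) div 2)"
      "half_coord h (c k + 1) = h ((c k - 1) div 2 + 1)" by (simp_all add: half_coord_def)
  qed
  have "dbox g c = cell_set g (\<lambda>k. (c k - 1) div 2)"
    unfolding dbox_def cell_set_def nodes ..
  then show ?thesis using assms unfolding is_cell_def by blast
qed

lemma measure_cbox_cart:
  fixes a b :: "real^'n::finite"
  assumes "\<And>k. a $ k \<le> b $ k"
  shows "measure lborel (cbox a b) = (\<Prod>k\<in>UNIV. b $ k - a $ k)"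
    and "measure lborel (box a b) = (\<Prod>k\<in>UNIV. b $ k - a $ k)"
proof -
  have "a \<in> cbox a b" using assms by (simp add: mem_box_cart)
  then have "cbox a b \<noteq> {}" by blast
  then show "measure lborel (cbox a b) = (\<Prod>k\<in>UNIV. b $ k - a $ k)"
    by (rule content_cbox_cart)
  then show "measure lborel (box a b) = (\<Prod>k\<in>UNIV. b $ k - a $ k)"
    by (simp add: measure_lborel_box_eq measure_lborel_cbox_eq)
qed

definition dbox_meas :: "('n::finite \<Rightarrow> int \<Rightarrow> real) \<Rightarrow> ('n \<Rightarrow> int) set \<Rightarrow> ('n \<Rightarrow> int) \<Rightarrow> real" where
  "dbox_meas g C q = measure lborel (Omega g C \<inter> dbox g q)"

lemma sets_Omega [measurable]: "Omega g C \<in> sets borel"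
  unfolding Omega_def by (simp add: borel_open)

lemma sets_dbox [measurable]: "dbox g q \<in> sets borel"
  unfolding dbox_eq_cbox by (simp add: borel_closed)

lemma fmeasurable_dbox: "dbox g q \<in> fmeasurable lborel"
  unfolding dbox_eq_cbox by simp

lemma measure_dbox:
  assumes "\<forall>k. strict_mono (g k)"
  shows "measure lborel (dbox g q) = (\<Prod>k\<in>UNIV. span g k (q k))"
  unfolding dbox_eq_cbox using dbox_lo_le_hi[OF assms]
  by (simp add: measure_cbox_cart dbox_lo_def dbox_hi_def span_def)

lemma dbox_meas_le:
  assumes "\<forall>k. strict_mono (g k)"
  shows "dbox_meas g C q \<le> (\<Prod>k\<in>UNIV. span g k (q k))"
proof -
  have "dbox_meas g C q \<le> measure lborel (dbox g q)"
    unfolding dbox_meas_def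
    by (rule measure_mono_fmeasurable) (auto simp: fmeasurable_dbox)
  then show ?thesis using measure_dbox[OF assms] by simp
qed

lemma dbox_meas_ge_cbox:
  assumes "cbox a b \<subseteq> (\<Union>m\<in>C. cell_set g m)" "cbox a b \<subseteq> dbox g q" "\<And>k. a $ k \<le> b $ k"
  shows "(\<Prod>k\<in>UNIV. b $ k - a $ k) \<le> dbox_meas g C q"
proof -
  have "box a b \<subseteq> Omega g C"
    unfolding Omega_def using interior_mono[OF assms(1)] by simp
  moreover have "box a b \<subseteq> dbox g q" using assms(2) box_subset_cbox by blast
  moreover have "Omega g C \<inter> dbox g q \<in> fmeasurable lborel"
    by (rule fmeasurableI2[OF fmeasurable_dbox]) auto
  ultimately have "measure lborel (box a b) \<le> dbox_meas g C q"
    unfolding dbox_meas_def by (intro measure_mono_fmeasurable) auto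
  then show ?thesis using measure_cbox_cart(2)[of a b] assms(3) by simp
qed

section \<open>Integrals of products of step functions\<close>

lemma sum_indicator_unique:
  assumes "finite Q" "q0 \<in> Q" "x \<in> B q0" "\<And>q. q \<in> Q \<Longrightarrow> x \<in> B q \<Longrightarrow> q = q0"
  shows "(\<Sum>q\<in>Q. f q * indicator (B q) x) = (f q0 :: real)"
proof -
  have "f q * indicator (B q) x = (if q = q0 then f q else 0)" if "q \<in> Q" for q
    using assms(3) assms(4)[OF that] by (cases "x \<in> B q") (auto simp: indicator_def)
  then have "(\<Sum>q\<in>Q. f q * indicator (B q) x) = (\<Sum>q\<in>Q. if q = q0 then f q else 0)"
    by (rule sum.cong[OF refl])
  also have "\<dots> = f q0" using assms(1,2) by simp
  finally show ?thesis .
qed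

lemma sum_indicator_mult3:
  assumes "finite Q" "\<And>q q'. q \<in> Q \<Longrightarrow> q' \<in> Q \<Longrightarrow> x \<in> B q \<Longrightarrow> x \<in> B q' \<Longrightarrow> q = q'"
  shows "(\<Sum>q\<in>Q. a q * indicator (B q) x) * (\<Sum>q\<in>Q. b q * indicator (B q) x) *
           (\<Sum>q\<in>Q. c q * indicator (B q) x)
       = (\<Sum>q\<in>Q. a q * b q * c q * indicator (B q) x :: real)"
proof (cases "\<exists>q0\<in>Q. x \<in> B q0")
  case True
  then obtain q0 where "q0 \<in> Q" "x \<in> B q0" by blast
  with assms have "(\<Sum>q\<in>Q. f q * indicator (B q) x) = f q0" for f :: "_ \<Rightarrow> real"
    by (intro sum_indicator_unique) auto
  then show ?thesis by (simp only:)
qed (simp add: indicator_def)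

lemma set_integral_sum_indicator_mult3:
  assumes "finite Q" "A \<in> sets M" "\<And>q. B q \<in> sets M" "\<And>q. emeasure M (B q) < \<infinity>"
    and "AE x in M. \<forall>q\<in>Q. \<forall>q'\<in>Q. x \<in> B q \<longrightarrow> x \<in> B q' \<longrightarrow> q = q'"
  shows "(LINT x:A|M. (\<Sum>q\<in>Q. a q * indicator (B q) x) * (\<Sum>q\<in>Q. b q * indicator (B q) x) *
                       (\<Sum>q\<in>Q. c q * indicator (B q) x))
       = (\<Sum>q\<in>Q. a q * b q * c q * measure M (A \<inter> B q))"
proof -
  have finite_AB: "emeasure M (A \<inter> B q) < \<infinity>" for q
    by (rule le_less_trans[OF emeasure_mono assms(4)]) (use assms(3) in auto)
  have "(LINT x:A|M. (\<Sum>q\<in>Q. a q * indicator (B q) x) * (\<Sum>q\<in>Q. b q * indicator (B q) x) *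
                       (\<Sum>q\<in>Q. c q * indicator (B q) x))
      = (LINT x|M. (\<Sum>q\<in>Q. a q * b q * c q * indicator (A \<inter> B q) x))"
    unfolding set_lebesgue_integral_def
  proof (rule integral_cong_AE)
    show "AE x in M. indicator A x *\<^sub>R ((\<Sum>q\<in>Q. a q * indicator (B q) x) *
            (\<Sum>q\<in>Q. b q * indicator (B q) x) * (\<Sum>q\<in>Q. c q * indicator (B q) x))
          = (\<Sum>q\<in>Q. a q * b q * c q * indicator (A \<inter> B q) x)"
      using assms(5)
    proof eventually_elim
      case (elim x)
      then have "(\<Sum>q\<in>Q. a q * indicator (B q) x) * (\<Sum>q\<in>Q. b q * indicator (B q) x) *
          (\<Sum>q\<in>Q. c q * indicator (B q) x) = (\<Sum>q\<in>Q. a q * b q * c q * indicator (B q) x)"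
        by (intro sum_indicator_mult3[OF assms(1)]) blast
      then show ?case by (simp add: indicator_inter_arith sum_distrib_left mult.left_commute)
    qed
  qed (use assms(2,3) in auto)
  also have "\<dots> = (\<Sum>q\<in>Q. a q * b q * c q * measure M (A \<inter> B q))"
  proof -
    have AB: "A \<inter> B q \<in> sets M" for q using assms(2,3) by simp
    then have "integrable M (indicat_real (A \<inter> B q))" for q
      using finite_AB by (rule integrable_real_indicator)
    then show ?thesis by (simp add: Bochner_Integration.integral_sum sets.Int_space_eq2[OF AB])
  qed
  finally show ?thesis .
qed

lemma AE_unique_cbox:
  fixes lo hi :: "'q \<Rightarrow> 'a::euclidean_space"
  assumes "finite Q"
    and "\<And>q q'. q \<in> Q \<Longrightarrow> q' \<in> Q \<Longrightarrow> q \<noteq> q' \<Longrightarrow> box (lo q) (hi q) \<inter> box (lo q') (hi q') = {}"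
  shows "AE x in lborel. \<forall>q\<in>Q. \<forall>q'\<in>Q. x \<in> cbox (lo q) (hi q) \<longrightarrow> x \<in> cbox (lo q') (hi q') \<longrightarrow> q = q'"
proof -
  have "(\<Union>q\<in>Q. cbox (lo q) (hi q) - box (lo q) (hi q)) \<in> null_sets lborel"
    using assms(1) by (intro null_sets.finite_UN) (auto simp: null_sets_cbox_Diff_box)
  then have "AE x in lborel. x \<notin> (\<Union>q\<in>Q. cbox (lo q) (hi q) - box (lo q) (hi q))"
    by (rule AE_not_in)
  then show ?thesis
  proof eventually_elim
    case (elim x)
    then have "x \<in> box (lo q) (hi q)" if "q \<in> Q" "x \<in> cbox (lo q) (hi q)" for q
      using that by blast
    then show ?case using assms(2) by blast
  qed
qed

lemma ij_cells_commute: "ij_cells C j i = ij_cells C i j"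
  unfolding ij_cells_def ij_pos_def by auto

lemma finite_ij_cells:
  fixes C :: "('n::finite \<Rightarrow> int) set"
  assumes "finite C"
  shows "finite (ij_cells C i j)"
proof (rule finite_subset)
  show "ij_cells C i j \<subseteq> (\<Union>m\<in>C. Pi\<^sub>E UNIV (\<lambda>k. {2 * m k .. 2 * m k + 2}))"
    unfolding ij_cells_def near_mesh_def PiE_UNIV_domain by auto
  show "finite (\<Union>m\<in>C. Pi\<^sub>E UNIV (\<lambda>k. {2 * m k .. 2 * m k + 2}))"
    using assms by (intro finite_UN_I) (auto intro!: finite_PiE)
qed

lemma ij_cells_box_disjoint:
  assumes sm: "\<forall>k. strict_mono (g k)"
    and "q \<in> ij_cells C i j" "q' \<in> ij_cells C i j" "q \<noteq> q'"
  shows "box (dbox_lo g q) (dbox_hi g q) \<inter> box (dbox_lo g q') (dbox_hi g q') = {}"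
proof -
  obtain k where k: "q k \<noteq> q' k" using \<open>q \<noteq> q'\<close> by auto
  have "even (q k) = even (q' k)" using assms(2,3) unfolding ij_cells_def ij_pos_def by auto
  with k have apart: "q k + 2 \<le> q' k \<or> q' k + 2 \<le> q k" by presburger
  have "x \<notin> box (dbox_lo g a) (dbox_hi g a) \<inter> box (dbox_lo g b) (dbox_hi g b)"
    if "a k + 2 \<le> b k" for a b x
  proof
    assume "x \<in> box (dbox_lo g a) (dbox_hi g a) \<inter> box (dbox_lo g b) (dbox_hi g b)"
    then have "x $ k < half_coord (g k) (a k + 1)" "half_coord (g k) (b k - 1) < x $ k"
      by (simp_all add: mem_box_cart dbox_lo_def dbox_hi_def)
    moreover have "half_coord (g k) (a k + 1) \<le> half_coord (g k) (b k - 1)"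
      using sm that by (simp add: half_coord_mono)
    ultimately show False by linarith
  qed
  with apart show ?thesis by blast
qed

lemma AE_unique_dbox:
  assumes "\<forall>k. strict_mono (g k)" "finite C"
  shows "AE x in lborel. \<forall>q\<in>ij_cells C i j. \<forall>q'\<in>ij_cells C i j.
           x \<in> dbox g q \<longrightarrow> x \<in> dbox g q' \<longrightarrow> q = q'"
  unfolding dbox_eq_cbox
  by (rule AE_unique_cbox[OF finite_ij_cells[OF assms(2)] ij_cells_box_disjoint[OF assms(1)]])

lemma set_integral_recon_recon_eth:
  fixes g :: "'n::finite \<Rightarrow> int \<Rightarrow> real"
  assumes sm: "\<forall>k. strict_mono (g k)" and finC: "finite C"
  shows "(LINT x:Omega g C|lborel. recon g C i j \<alpha> V x * recon g C j i \<beta> U x * eth g C i j W x)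
    = (\<Sum>q\<in>ij_cells C i j.
         (\<alpha> q * V (q(j := q j - 1)) + (1 - \<alpha> q) * V (q(j := q j + 1)))
         * (\<beta> q * U (q(i := q i - 1)) + (1 - \<beta> q) * U (q(i := q i + 1)))
         * eth_val g C i j W q * dbox_meas g C q)"
  unfolding recon_def eth_def ij_cells_commute[of C j i] dbox_meas_def
  using fmeasurable_dbox[of g] unfolding fmeasurable_def
  by (intro set_integral_sum_indicator_mult3 finite_ij_cells[OF finC] AE_unique_dbox[OF sm finC]) auto

lemma mem_dbox_adjacent:
  assumes sm: "\<forall>k. strict_mono (g k)" and x: "x \<in> dbox g q"
    and near: "\<And>k. c k = q k \<or> c k = q k - 1 \<or> c k = q k + 1"
    and side: "\<And>k. (c k = q k - 1 \<longrightarrow> x $ k \<le> half_coord (g k) (q k)) \<and>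
                    (c k = q k + 1 \<longrightarrow> half_coord (g k) (q k) \<le> x $ k)"
  shows "x \<in> dbox g c"
proof -
  have "half_coord (g k) (c k - 1) \<le> x $ k \<and> x $ k \<le> half_coord (g k) (c k + 1)" for k
  proof -
    have lo: "half_coord (g k) (q k - 1) \<le> x $ k" and hi: "x $ k \<le> half_coord (g k) (q k + 1)"
      using x by (simp_all add: dbox_def)
    consider "c k = q k" | "c k = q k - 1" | "c k = q k + 1" using near by blast
    then show ?thesis
    proof cases
      case 1
      then show ?thesis using lo hi by simp
    next
      case 2
      then have e: "c k - 1 = q k - 2" "c k + 1 = q k" by simp_all
      have "x $ k \<le> half_coord (g k) (q k)" using side[of k] 2 by simp
      moreover have "half_coord (g k) (q k - 2) \<le> half_coord (g k) (q k - 1)"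
        using sm by (simp add: half_coord_mono)
      ultimately show ?thesis unfolding e using lo by linarith
    next
      case 3
      then have e: "c k - 1 = q k" "c k + 1 = q k + 2" by simp_all
      have "half_coord (g k) (q k) \<le> x $ k" using side[of k] 3 by simp
      moreover have "half_coord (g k) (q k + 1) \<le> half_coord (g k) (q k + 2)"
        using sm by (simp add: half_coord_mono)
      ultimately show ?thesis unfolding e using hi by linarith
    qed
  qed
  then show ?thesis by (simp add: dbox_def)
qed

lemma dbox_meas_eq_if_covered:
  assumes sm: "\<forall>k. strict_mono (g k)" and "dbox g q \<subseteq> (\<Union>m\<in>C. cell_set g m)"
  shows "dbox_meas g C q = (\<Prod>k\<in>UNIV. span g k (q k))"
proof (rule antisym[OF dbox_meas_le[OF sm]])
  have "(\<Prod>k\<in>UNIV. dbox_hi g q $ k - dbox_lo g q $ k) \<le> dbox_meas g C q"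
    using assms(2) dbox_lo_le_hi[OF sm] by (intro dbox_meas_ge_cbox) (auto simp: dbox_eq_cbox)
  then show "(\<Prod>k\<in>UNIV. span g k (q k)) \<le> dbox_meas g C q"
    by (simp add: dbox_lo_def dbox_hi_def span_def)
qed

lemma dbox_meas_ge_slab:
  assumes sm: "\<forall>k. strict_mono (g k)"
    and "half_coord (g i) (q i - 1) \<le> lo" "lo \<le> hi" "hi \<le> half_coord (g i) (q i + 1)"
    and cov: "\<And>x. x \<in> dbox g q \<Longrightarrow> lo \<le> x $ i \<Longrightarrow> x $ i \<le> hi \<Longrightarrow> x \<in> (\<Union>m\<in>C. cell_set g m)"
  shows "(hi - lo) * (\<Prod>k\<in>UNIV - {i}. span g k (q k)) \<le> dbox_meas g C q"
proof -
  define a where "a = (\<chi> k. if k = i then lo else dbox_lo g q $ k)"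
  define b where "b = (\<chi> k. if k = i then hi else dbox_hi g q $ k)"
  have ab: "a $ k \<le> b $ k" for k
    using assms(3) dbox_lo_le_hi[OF sm] by (simp add: a_def b_def)
  have bounds: "a $ k \<le> x $ k \<and> x $ k \<le> b $ k" if "x \<in> cbox a b" for x k
    using that by (simp add: mem_box_cart)
  have slab: "lo \<le> x $ i \<and> x $ i \<le> hi" if "x \<in> cbox a b" for x
    using bounds[OF that, of i] by (simp add: a_def b_def)
  have "x \<in> dbox g q" if "x \<in> cbox a b" for x
    unfolding dbox_def
  proof (intro CollectI allI)
    fix k
    show "half_coord (g k) (q k - 1) \<le> x $ k \<and> x $ k \<le> half_coord (g k) (q k + 1)"
      using bounds[OF that, of k] assms(2,4) by (cases "k = i") (auto simp: a_def b_def dbox_lo_def dbox_hi_def)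
  qed
  then have "cbox a b \<subseteq> dbox g q" by blast
  have "(\<Prod>k\<in>UNIV. b $ k - a $ k) \<le> dbox_meas g C q"
    using \<open>cbox a b \<subseteq> dbox g q\<close> slab cov ab by (intro dbox_meas_ge_cbox) blast+
  moreover have "(\<Prod>k\<in>UNIV. b $ k - a $ k) = (hi - lo) * (\<Prod>k\<in>UNIV - {i}. span g k (q k))"
    by (subst prod.remove[of _ i]) (auto simp: a_def b_def dbox_lo_def dbox_hi_def span_def intro!: prod.cong)
  ultimately show ?thesis by simp
qed

lemma int_face_across:
  assumes ne: "i \<noteq> j" and s: "s = -1 \<or> s = 1" and f: "int_face C j (q(i := q i + s))"
  shows "even (q i)" "even (q j)" "\<And>k. k \<noteq> i \<Longrightarrow> k \<noteq> j \<Longrightarrow> odd (q k)"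
    and "is_cell C (q(i := q i + s, j := q j - 1))" "is_cell C (q(i := q i + s, j := q j + 1))"
proof -
  have f': "even (q j)" "\<And>k. k \<noteq> j \<Longrightarrow> odd ((q(i := q i + s)) k)"
    "is_cell C ((q(i := q i + s))(j := q j - 1))" "is_cell C ((q(i := q i + s))(j := q j + 1))"
    using f ne unfolding int_face_def by auto
  show "even (q j)" by fact
  have "odd (q i + s)" using f'(2)[of i] ne by simp
  then show "even (q i)" using s by auto
  show "\<And>k. k \<noteq> i \<Longrightarrow> k \<noteq> j \<Longrightarrow> odd (q k)" using f'(2) by force
  show "is_cell C (q(i := q i + s, j := q j - 1))" "is_cell C (q(i := q i + s, j := q j + 1))"
    using f'(3,4) by simp_all
qed

lemma face_meas_upd_mult_span:
  fixes g :: "'n::finite \<Rightarrow> int \<Rightarrow> real"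
  assumes "i \<noteq> j"
  shows "face_meas g j (q(i := c)) * span g j (q j) = span g i c * (\<Prod>k\<in>UNIV - {i}. span g k (q k))"
proof -
  define P where "P = (\<Prod>k\<in>UNIV - {i} - {j}. span g k (q k))"
  have "UNIV - {j} - {i} = UNIV - {i} - {j}" by auto
  then have "face_meas g j (q(i := c)) = span g i c * P"
    unfolding face_meas_def P_def using assms
    by (subst prod.remove[of _ i]) (auto intro!: prod.cong)
  moreover have "(\<Prod>k\<in>UNIV - {i}. span g k (q k)) = span g j (q j) * P"
    unfolding P_def using assms by (subst prod.remove[of _ j]) auto
  ultimately show ?thesis by simp
qed

lemma dbox_meas_ge_half:
  fixes g :: "'n::finite \<Rightarrow> int \<Rightarrow> real"
  assumes sm: "\<forall>k. strict_mono (g k)" and ne: "i \<noteq> j" and s: "s = -1 \<or> s = 1"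
    and f: "int_face C j (q(i := q i + s))"
  shows "face_meas g j (q(i := q i + s)) * span g j (q j) / 2 \<le> dbox_meas g C q"
proof -
  note across = int_face_across[OF ne s f]
  define lo where "lo = (if s = -1 then half_coord (g i) (q i - 1) else half_coord (g i) (q i))"
  define hi where "hi = (if s = -1 then half_coord (g i) (q i) else half_coord (g i) (q i + 1))"
  have mono: "half_coord (g i) (q i - 1) \<le> half_coord (g i) (q i)"
    "half_coord (g i) (q i) \<le> half_coord (g i) (q i + 1)"
    using sm by (simp_all add: half_coord_mono)
  have "(hi - lo) * (\<Prod>k\<in>UNIV - {i}. span g k (q k)) \<le> dbox_meas g C q"
  proof (rule dbox_meas_ge_slab[OF sm])
    show "half_coord (g i) (q i - 1) \<le> lo" "lo \<le> hi" "hi \<le> half_coord (g i) (q i + 1)"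
      using mono by (auto simp: lo_def hi_def)
    fix x
    assume x: "x \<in> dbox g q" and xi: "lo \<le> x $ i" "x $ i \<le> hi"
    \<comment> \<open>the two cells adjacent to the interior face \<open>q + s e\<^sub>i\<close> cover the half of \<open>D\<^sub>q\<close> on its side\<close>
    define c where "c = q(i := q i + s, j := if x $ j \<le> half_coord (g j) (q j) then q j - 1 else q j + 1)"
    have "is_cell C c" unfolding c_def using across(4,5) by auto
    moreover have "x \<in> dbox g c"
      by (rule mem_dbox_adjacent[OF sm x]) (use s ne xi in \<open>auto simp: c_def lo_def hi_def\<close>)
    ultimately show "x \<in> (\<Union>m\<in>C. cell_set g m)" using dbox_cell_subset by blast
  qed
  moreover have "span g i (q i + s) = 2 * (hi - lo)"
    using s span_around_even(1,2)[OF across(1), of g i] by (auto simp: lo_def hi_def)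
  then have "face_meas g j (q(i := q i + s)) * span g j (q j) / 2 = (hi - lo) * (\<Prod>k\<in>UNIV - {i}. span g k (q k))"
    by (simp add: face_meas_upd_mult_span[OF ne])
  ultimately show ?thesis by linarith
qed

lemma dbox_meas_two_sided:
  fixes g :: "'n::finite \<Rightarrow> int \<Rightarrow> real"
  assumes sm: "\<forall>k. strict_mono (g k)" and ne: "i \<noteq> j"
    and "int_face C j (q(i := q i - 1))" "int_face C j (q(i := q i + 1))"
  shows "dbox_meas g C q
    = (face_meas g j (q(i := q i - 1)) + face_meas g j (q(i := q i + 1))) * span g j (q j) / 2"
proof -
  have "int_face C j (q(i := q i + -1))" using assms(3) by simp
  note below = int_face_across[OF ne disjI1[OF refl] this]
    and above = int_face_across[OF ne disjI2[OF refl] assms(4)]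
  have "dbox g q \<subseteq> (\<Union>m\<in>C. cell_set g m)"
  proof
    fix x
    assume x: "x \<in> dbox g q"
    define c where "c = q(i := if x $ i \<le> half_coord (g i) (q i) then q i - 1 else q i + 1,
                         j := if x $ j \<le> half_coord (g j) (q j) then q j - 1 else q j + 1)"
    have "is_cell C c" unfolding c_def using below(4,5) above(4,5) by auto
    moreover have "x \<in> dbox g c" by (rule mem_dbox_adjacent[OF sm x]) (use ne in \<open>auto simp: c_def\<close>)
    ultimately show "x \<in> (\<Union>m\<in>C. cell_set g m)" using dbox_cell_subset by blast
  qed
  then have "dbox_meas g C q = span g i (q i) * (\<Prod>k\<in>UNIV - {i}. span g k (q k))"
    by (simp add: dbox_meas_eq_if_covered[OF sm] prod.remove[of UNIV i])
  moreover have "(face_meas g j (q(i := q i - 1)) + face_meas g j (q(i := q i + 1))) * span g j (q j) / 2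
      = (span g i (q i - 1) + span g i (q i + 1)) * (\<Prod>k\<in>UNIV - {i}. span g k (q k)) / 2"
    by (simp only: distrib_right face_meas_upd_mult_span[OF ne])
  moreover have "span g i (q i - 1) + span g i (q i + 1) = 2 * span g i (q i)"
    by (rule span_around_even(3)[OF below(1)])
  ultimately show ?thesis by simp
qed

lemma dbox_meas_cell:
  fixes g :: "'n::finite \<Rightarrow> int \<Rightarrow> real"
  assumes sm: "\<forall>k. strict_mono (g k)" and "is_cell C q"
  shows "dbox_meas g C q
    = (face_meas g i (q(i := q i - 1)) + face_meas g i (q(i := q i + 1))) * span g i (q i) / 2"
proof -
  have "face_meas g i (q(i := c)) = (\<Prod>k\<in>UNIV - {i}. span g k (q k))" for c
    unfolding face_meas_def by (rule prod.cong) auto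
  then show ?thesis
    using dbox_meas_eq_if_covered[OF sm dbox_cell_subset[OF assms(2)]]
    by (simp add: prod.remove[of UNIV i])
qed

lemma dface_meas_upd: "dface_meas g j (q(j := c)) = dface_meas g j q"
  unfolding dface_meas_def by (rule prod.cong) auto

lemma dface_meas_pos: "\<forall>k. strict_mono (g k) \<Longrightarrow> 0 < dface_meas g j q"
  unfolding dface_meas_def by (rule prod_pos) (simp add: span_pos)

lemma face_meas_pos: "\<forall>k. strict_mono (g k) \<Longrightarrow> 0 < face_meas g j q"
  unfolding face_meas_def by (rule prod_pos) (simp add: span_pos)

(* The mass flux |epsilon| u_{sigma,epsilon} through the dual face q of the i-th dual mesh
   orthogonal to e_j, from sigma = q - e_j to sigma' = q + e_j (case (b) of the definition when
   i \<noteq> j, case (a) when i = j). *)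
definition dual_flux :: "('n::finite \<Rightarrow> int \<Rightarrow> real) \<Rightarrow> ('n \<Rightarrow> ('n \<Rightarrow> int) \<Rightarrow> real) \<Rightarrow> 'n \<Rightarrow> 'n \<Rightarrow>
    ('n \<Rightarrow> int) \<Rightarrow> real" where
  "dual_flux g u i j q =
     (face_meas g j (q(i := q i - 1)) * u j (q(i := q i - 1))
      + face_meas g j (q(i := q i + 1)) * u j (q(i := q i + 1))) / 2"

lemma mflux_pred_dual_face: "mflux g u i (q(j := q j - 1)) j 1 = dual_flux g u i j q"
proof (cases "j = i")
  case True
  then show ?thesis by (simp add: mflux_def dual_flux_def Let_def uK_def add.commute)
next
  case False
  then have "(q(j := q j - 1))(i := q i - 1, j := q j) = q(i := q i - 1)"
    "(q(j := q j - 1))(i := q i + 1, j := q j) = q(i := q i + 1)"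
    by (auto simp: fun_eq_iff)
  with False show ?thesis by (simp add: mflux_def dual_flux_def Let_def uK_def)
qed

lemma mflux_succ_dual_face: "mflux g u i (q(j := q j + 1)) j (-1) = - dual_flux g u i j q"
proof (cases "j = i")
  case True
  then show ?thesis by (simp add: mflux_def dual_flux_def Let_def uK_def field_simps)
next
  case False
  then have "(q(j := q j + 1))(i := q i - 1, j := q j) = q(i := q i - 1)"
    "(q(j := q j + 1))(i := q i + 1, j := q j) = q(i := q i + 1)"
    by (auto simp: fun_eq_iff)
  with False show ?thesis by (simp add: mflux_def dual_flux_def Let_def uK_def field_simps)
qed

definition v_weight :: "bool \<Rightarrow> ('n::finite \<Rightarrow> int \<Rightarrow> real) \<Rightarrow> ('n \<Rightarrow> ('n \<Rightarrow> int) \<Rightarrow> real) \<Rightarrow> 'n \<Rightarrow> 'n \<Rightarrow>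
    ('n \<Rightarrow> int) \<Rightarrow> real" where
  "v_weight upw g u i j q = (if \<not> upw then 1 / 2 else if 0 \<le> dual_flux g u i j q then 1 else 0)"

lemma vstar_dual_face:
  fixes upw :: bool
  assumes sm: "\<forall>k. strict_mono (g k)" and nz: "dual_flux g u i j q \<noteq> 0"
  defines "\<alpha> \<equiv> v_weight upw g u i j q"
  shows "vstar upw g u i v (q(j := q j - 1)) j 1 = \<alpha> * v (q(j := q j - 1)) + (1 - \<alpha>) * v (q(j := q j + 1))"
    and "vstar upw g u i v (q(j := q j + 1)) j (-1) = \<alpha> * v (q(j := q j - 1)) + (1 - \<alpha>) * v (q(j := q j + 1))"
proof -
  have "0 < dface_meas g j q" using sm by (rule dface_meas_pos)
  then have sign: "0 \<le> uflux g u i (q(j := q j - 1)) j 1 \<longleftrightarrow> 0 \<le> dual_flux g u i j q"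
    "0 \<le> uflux g u i (q(j := q j + 1)) j (-1) \<longleftrightarrow> \<not> 0 \<le> dual_flux g u i j q"
    using nz by (auto simp: uflux_def mflux_pred_dual_face mflux_succ_dual_face dface_meas_upd
        zero_le_divide_iff divide_le_0_iff)
  have shift: "q j - 1 + 2 * 1 = q j + 1" "q j + 1 + 2 * - 1 = q j - 1" by simp_all
  show "vstar upw g u i v (q(j := q j - 1)) j 1 = \<alpha> * v (q(j := q j - 1)) + (1 - \<alpha>) * v (q(j := q j + 1))"
    and "vstar upw g u i v (q(j := q j + 1)) j (-1) = \<alpha> * v (q(j := q j - 1)) + (1 - \<alpha>) * v (q(j := q j + 1))"
    unfolding vstar_def Let_def fun_upd_upd fun_upd_same shift
    by (auto simp: sign \<alpha>_def v_weight_def)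
qed

lemma flux_pair_dual_face:
  fixes g :: "'n::finite \<Rightarrow> int \<Rightarrow> real" and u :: "'n \<Rightarrow> ('n \<Rightarrow> int) \<Rightarrow> real"
    and upw :: bool and i j :: 'n and q :: "'n \<Rightarrow> int"
  assumes "\<forall>k. strict_mono (g k)"
  defines "\<alpha> \<equiv> v_weight upw g u i j q"
  shows "w (q(j := q j - 1)) * (mflux g u i (q(j := q j - 1)) j 1 * vstar upw g u i v (q(j := q j - 1)) j 1)
       + w (q(j := q j + 1)) * (mflux g u i (q(j := q j + 1)) j (-1) * vstar upw g u i v (q(j := q j + 1)) j (-1))
     = dual_flux g u i j q * (\<alpha> * v (q(j := q j - 1)) + (1 - \<alpha>) * v (q(j := q j + 1)))
         * (w (q(j := q j - 1)) - w (q(j := q j + 1)))"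
proof (cases "dual_flux g u i j q = 0")
  case True
  then show ?thesis by (simp add: mflux_pred_dual_face mflux_succ_dual_face)
next
  case False
  then show ?thesis
    unfolding mflux_pred_dual_face mflux_succ_dual_face vstar_dual_face[OF assms(1) False] \<alpha>_def
    by (simp add: algebra_simps)
qed

section \<open>The weights of the reconstruction of the convecting velocity\<close>

definition balance_weight :: "real \<Rightarrow> real \<Rightarrow> real \<Rightarrow> real \<Rightarrow> real \<Rightarrow> real \<Rightarrow> real" where
  "balance_weight fa fb d M ua ub =
     (if ua \<noteq> 0 \<and> ub \<noteq> 0 then fa / (fa + fb)
      else if ua \<noteq> 0 then fa * d / (2 * M)
      else if ub \<noteq> 0 then 1 - fb * d / (2 * M)
      else 0)"

lemma balance_weight:
  fixes fa fb d M ua ub :: real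
  assumes pos: "0 < fa" "0 < fb" "0 < d"
    and both: "ua \<noteq> 0 \<Longrightarrow> ub \<noteq> 0 \<Longrightarrow> M = (fa + fb) * d / 2"
    and below: "ua \<noteq> 0 \<Longrightarrow> fa * d / 2 \<le> M"
    and above: "ub \<noteq> 0 \<Longrightarrow> fb * d / 2 \<le> M"
  defines "\<alpha> \<equiv> balance_weight fa fb d M ua ub"
  shows "0 \<le> \<alpha> \<and> \<alpha> \<le> 1"
    and "(\<alpha> * ua + (1 - \<alpha>) * ub) * M = (fa * ua + fb * ub) / 2 * d"
proof -
  consider "ua \<noteq> 0" "ub \<noteq> 0" | "ua \<noteq> 0" "ub = 0" | "ua = 0" "ub \<noteq> 0" | "ua = 0" "ub = 0"
    by blast
  then have "0 \<le> \<alpha> \<and> \<alpha> \<le> 1 \<and> (\<alpha> * ua + (1 - \<alpha>) * ub) * M = (fa * ua + fb * ub) / 2 * d"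
  proof cases
    case 1
    then have \<alpha>: "\<alpha> = fa / (fa + fb)" and M: "M = (fa + fb) * d / 2"
      using both by (simp_all add: \<alpha>_def balance_weight_def)
    have s: "0 < fa + fb" using pos by simp
    then have "1 - \<alpha> = fb / (fa + fb)" by (simp add: \<alpha> field_simps)
    then have e: "\<alpha> * ua + (1 - \<alpha>) * ub = (fa * ua + fb * ub) / (fa + fb)"
      by (simp add: \<alpha> add_divide_distrib)
    have "(\<alpha> * ua + (1 - \<alpha>) * ub) * M = (fa * ua + fb * ub) / (fa + fb) * ((fa + fb) * d / 2)"
      unfolding e M ..
    also have "\<dots> = (fa * ua + fb * ub) / 2 * d" using s by (simp add: field_simps)
    finally have "(\<alpha> * ua + (1 - \<alpha>) * ub) * M = (fa * ua + fb * ub) / 2 * d" .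
    moreover have "0 \<le> \<alpha> \<and> \<alpha> \<le> 1" unfolding \<alpha> using pos s by (simp add: field_simps)
    ultimately show ?thesis by simp
  next
    case 2
    then have \<alpha>: "\<alpha> = fa * d / (2 * M)" and le: "fa * d / 2 \<le> M"
      using below by (simp_all add: \<alpha>_def balance_weight_def)
    have "0 < fa * d" using pos by simp
    with le have "0 < M" by linarith
    with \<open>0 < fa * d\<close> le 2 show ?thesis
      by (simp add: \<alpha> divide_le_eq_1 zero_le_divide_iff)
  next
    case 3
    then have \<alpha>: "\<alpha> = 1 - fb * d / (2 * M)" and le: "fb * d / 2 \<le> M"
      using above by (simp_all add: \<alpha>_def balance_weight_def)
    have "0 < fb * d" using pos by simp
    with le have "0 < M" by linarith
    with \<open>0 < fb * d\<close> le 3 show ?thesis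
      by (simp add: \<alpha> divide_le_eq_1 zero_le_divide_iff)
  next
    case 4
    then show ?thesis by (simp add: \<alpha>_def balance_weight_def)
  qed
  then show "0 \<le> \<alpha> \<and> \<alpha> \<le> 1" and "(\<alpha> * ua + (1 - \<alpha>) * ub) * M = (fa * ua + fb * ub) / 2 * d"
    by simp_all
qed

definition u_weight :: "('n::finite \<Rightarrow> int \<Rightarrow> real) \<Rightarrow> ('n \<Rightarrow> int) set \<Rightarrow> ('n \<Rightarrow> ('n \<Rightarrow> int) \<Rightarrow> real) \<Rightarrow>
    'n \<Rightarrow> 'n \<Rightarrow> ('n \<Rightarrow> int) \<Rightarrow> real" where
  "u_weight g C u i j q =
     balance_weight (face_meas g j (q(i := q i - 1))) (face_meas g j (q(i := q i + 1)))
       (span g j (q j)) (dbox_meas g C q) (u j (q(i := q i - 1))) (u j (q(i := q i + 1)))"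

lemma int_face_if_nonzero: "u \<in> H_E0 C \<Longrightarrow> u j p \<noteq> 0 \<Longrightarrow> int_face C j p"
  unfolding H_E0_def by auto

lemma is_cell_if_int_face_adjacent:
  assumes "int_face C i (q(i := q i + s))" "s = -1 \<or> s = 1"
  shows "is_cell C q"
  using assms by (auto simp: int_face_def)

lemma u_weight_balances:
  fixes g :: "'n::finite \<Rightarrow> int \<Rightarrow> real" and i j :: 'n and q :: "'n \<Rightarrow> int"
  assumes sm: "\<forall>k. strict_mono (g k)" and uH: "u \<in> H_E0 C"
  defines "\<alpha> \<equiv> u_weight g C u i j q"
  shows "0 \<le> \<alpha> \<and> \<alpha> \<le> 1"
    and "(\<alpha> * u j (q(i := q i - 1)) + (1 - \<alpha>) * u j (q(i := q i + 1))) * dbox_meas g C q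
         = dual_flux g u i j q * span g j (q j)"
proof -
  let ?fa = "face_meas g j (q(i := q i - 1))" and ?fb = "face_meas g j (q(i := q i + 1))"
    and ?d = "span g j (q j)" and ?M = "dbox_meas g C q"
  have pos: "0 < ?fa" "0 < ?fb" "0 < ?d" using sm by (simp_all add: face_meas_pos span_pos)
  have face_below: "int_face C j (q(i := q i + -1))" if "u j (q(i := q i - 1)) \<noteq> 0"
    using int_face_if_nonzero[of u C j "q(i := q i - 1)", OF uH that] by simp
  have face_above: "int_face C j (q(i := q i + 1))" if "u j (q(i := q i + 1)) \<noteq> 0"
    by (rule int_face_if_nonzero[of u C j "q(i := q i + 1)", OF uH that])
  have cell: "?M = (?fa + ?fb) * ?d / 2"
    if "i = j" "u j (q(i := q i - 1)) \<noteq> 0 \<or> u j (q(i := q i + 1)) \<noteq> 0"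
  proof -
    have "is_cell C q"
      using that face_below face_above is_cell_if_int_face_adjacent[of C i q "-1"]
        is_cell_if_int_face_adjacent[of C i q 1] by auto
    then show ?thesis using dbox_meas_cell[OF sm, of C q i] \<open>i = j\<close> by simp
  qed
  have "?M = (?fa + ?fb) * ?d / 2" if "u j (q(i := q i - 1)) \<noteq> 0" "u j (q(i := q i + 1)) \<noteq> 0"
    using that cell dbox_meas_two_sided[OF sm _ face_below[OF that(1), simplified] face_above[OF that(2)]]
    by blast
  moreover have "?fa * ?d / 2 \<le> ?M" if "u j (q(i := q i - 1)) \<noteq> 0"
    using that cell pos dbox_meas_ge_half[OF sm _ _ face_below[OF that]]
    by (cases "i = j") (auto simp: field_simps)
  moreover have "?fb * ?d / 2 \<le> ?M" if "u j (q(i := q i + 1)) \<noteq> 0"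
    using that cell pos dbox_meas_ge_half[OF sm _ _ face_above[OF that]]
    by (cases "i = j") (auto simp: field_simps)
  ultimately show "0 \<le> \<alpha> \<and> \<alpha> \<le> 1"
    and "(\<alpha> * u j (q(i := q i - 1)) + (1 - \<alpha>) * u j (q(i := q i + 1))) * ?M = dual_flux g u i j q * ?d"
    using balance_weight[OF pos] unfolding \<alpha>_def u_weight_def dual_flux_def by simp_all
qed

lemma is_face_around_cell:
  assumes "is_cell C q" "t = -1 \<or> t = 1"
  shows "is_face C i (q(i := q i + t))"
proof -
  have odd: "odd (q k)" for k using assms(1) by (simp add: is_cell_def)
  show ?thesis
    unfolding is_face_def fun_upd_same fun_upd_upd
  proof (intro conjI allI impI)
    show "even (q i + t)" using odd[of i] assms(2) by auto
    show "odd ((q(i := q i + t)) k)" if "k \<noteq> i" for k using odd[of k] that by simp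
    show "is_cell C (q(i := q i + t - 1)) \<or> is_cell C (q(i := q i + t + 1))"
      using assms by auto
  qed
qed

lemma is_face_around_int_face:
  assumes ne: "i \<noteq> j" and s: "s = -1 \<or> s = 1" and f: "int_face C j (q(i := q i + s))"
    and t: "t = -1 \<or> t = 1"
  shows "is_face C i (q(j := q j + t))"
proof -
  note across = int_face_across[OF ne s f]
  have "(q(j := q j + t))(i := q i + s) = q(i := q i + s, j := q j + t)"
    using ne by (auto simp: fun_eq_iff)
  moreover have "is_cell C (q(i := q i + s, j := q j + t))" using across(4,5) t by auto
  moreover have "odd ((q(j := q j + t)) k)" if "k \<noteq> i" for k
    using across(2,3) t that by (cases "k = j") auto
  ultimately show ?thesis unfolding is_face_def using ne across(1) s by auto
qed

lemma eth_val_centred: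
  "is_face C i (q(j := q j - 1)) \<Longrightarrow> is_face C i (q(j := q j + 1)) \<Longrightarrow>
   eth_val g C i j w q = (w (q(j := q j + 1)) - w (q(j := q j - 1))) / span g j (q j)"
  by (simp add: eth_val_def span_def)

lemma dual_cell_balance:
  fixes g :: "'n::finite \<Rightarrow> int \<Rightarrow> real" and i j :: 'n and q :: "'n \<Rightarrow> int"
  assumes sm: "\<forall>k. strict_mono (g k)" and uH: "u \<in> H_E0 C"
  defines "\<alpha> \<equiv> u_weight g C u i j q"
  shows "(\<alpha> * u j (q(i := q i - 1)) + (1 - \<alpha>) * u j (q(i := q i + 1))) * eth_val g C i j w q
           * dbox_meas g C q
       = dual_flux g u i j q * (w (q(j := q j + 1)) - w (q(j := q j - 1)))"
proof (cases "u j (q(i := q i - 1)) = 0 \<and> u j (q(i := q i + 1)) = 0")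
  case True
  then show ?thesis by (simp add: dual_flux_def)
next
  case False
  then obtain s where s: "s = -1 \<or> s = 1" and nz: "u j (q(i := q i + s)) \<noteq> 0"
    by (metis diff_conv_add_uminus)
  have f: "int_face C j (q(i := q i + s))" by (rule int_face_if_nonzero[of u C j, OF uH nz])
  have "is_face C i (q(j := q j + t))" if "t = -1 \<or> t = 1" for t
  proof (cases "i = j")
    case True
    then show ?thesis using is_cell_if_int_face_adjacent[OF _ s] f is_face_around_cell that by metis
  next
    case False
    show ?thesis by (rule is_face_around_int_face[OF False s f that])
  qed
  then have E: "eth_val g C i j w q = (w (q(j := q j + 1)) - w (q(j := q j - 1))) / span g j (q j)"
    using eth_val_centred[of C i q j] by (metis diff_conv_add_uminus)
  let ?R = "\<alpha> * u j (q(i := q i - 1)) + (1 - \<alpha>) * u j (q(i := q i + 1))"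
  have "?R * eth_val g C i j w q * dbox_meas g C q
      = ?R * dbox_meas g C q * (w (q(j := q j + 1)) - w (q(j := q j - 1))) / span g j (q j)"
    unfolding E by simp
  also have "\<dots> = dual_flux g u i j q * (w (q(j := q j + 1)) - w (q(j := q j - 1)))"
    using u_weight_balances(2)[OF sm uH, of i j q] span_pos[of g j "q j"] sm unfolding \<alpha>_def by simp
  finally show ?thesis .
qed

section \<open>Regrouping the convection form by dual faces\<close>

lemma sum_reindex_shift:
  assumes "finite Q" "\<And>p. p \<in> A \<Longrightarrow> sh p \<in> Q" "\<And>p. sh' (sh p) = p" "\<And>q. sh (sh' q) = q"
    and "\<And>p. p \<notin> A \<Longrightarrow> h p = 0"
  shows "(\<Sum>p\<in>A. h p) = (\<Sum>q\<in>Q. h (sh' q))"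
proof -
  have "inj_on sh A" by (metis inj_onI assms(3))
  then have "(\<Sum>p\<in>A. h p) = (\<Sum>q\<in>sh ` A. h (sh' q))"
    by (simp add: sum.reindex assms(3))
  also have "\<dots> = (\<Sum>q\<in>Q. h (sh' q))"
  proof (rule sum.mono_neutral_left[OF assms(1)])
    show "sh ` A \<subseteq> Q" using assms(2) by blast
    show "\<forall>q\<in>Q - sh ` A. h (sh' q) = 0" by (metis DiffD2 assms(4,5) image_eqI)
  qed
  finally show ?thesis .
qed

lemma shift_int_face_in_ij_cells:
  assumes f: "int_face C i p" and t: "t = -1 \<or> t = 1"
  shows "p(j := p j + t) \<in> ij_cells C i j"
proof -
  have p: "even (p i)" "\<And>k. k \<noteq> i \<Longrightarrow> odd (p k)"
    "is_cell C (p(i := p i - 1))" "is_cell C (p(i := p i + 1))"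
    using f unfolding int_face_def by auto
  define K where "K = (if i = j then p(i := p i + t) else p(i := p i - 1))"
  have K: "is_cell C K" using p(3,4) t unfolding K_def by auto
  define m where "m = (\<lambda>k. (K k - 1) div 2)"
  have mC: "m \<in> C" using K unfolding is_cell_def m_def by simp
  have m2: "2 * m k = K k - 1" for k
  proof -
    have "odd (K k)" using K by (simp add: is_cell_def)
    then show ?thesis unfolding m_def by presburger
  qed
  have near: "2 * m k \<le> (p(j := p j + t)) k \<and> (p(j := p j + t)) k \<le> 2 * m k + 2" for k
    unfolding m2 using t p by (cases "i = j"; cases "k = i"; cases "k = j") (auto simp: K_def)
  have pos: "ij_pos i j (p(j := p j + t))"
    unfolding ij_pos_def
  proof
    fix k
    show "even ((p(j := p j + t)) k) = (i \<noteq> j \<and> (k = i \<or> k = j))"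
    proof (cases "k = j")
      case True
      have "odd (p j)" if "i \<noteq> j" using p(2) that by metis
      with True show ?thesis using t p(1) by (cases "i = j") auto
    next
      case False
      then show ?thesis using p(1) p(2)[of k] by (cases "k = i") auto
    qed
  qed
  show ?thesis unfolding ij_cells_def near_mesh_def using pos mC near by blast
qed

lemma sum_int_faces_eq_sum_ij_cells:
  fixes C :: "('n::finite \<Rightarrow> int) set" and W :: "('n \<Rightarrow> int) \<Rightarrow> real"
    and f :: "('n \<Rightarrow> int) \<Rightarrow> int \<Rightarrow> real"
  assumes "finite C" and zero: "\<And>p. \<not> int_face C i p \<Longrightarrow> W p = 0"
  shows "(\<Sum>p\<in>{p. int_face C i p}. W p * (\<Sum>s\<in>{-1, 1}. f p s))
    = (\<Sum>q\<in>ij_cells C i j. W (q(j := q j - 1)) * f (q(j := q j - 1)) 1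
                            + W (q(j := q j + 1)) * f (q(j := q j + 1)) (-1))"
proof -
  have fin: "finite (ij_cells C i j)" using assms(1) by (rule finite_ij_cells)
  have "(\<Sum>p\<in>{p. int_face C i p}. W p * f p 1) = (\<Sum>q\<in>ij_cells C i j. W (q(j := q j - 1)) * f (q(j := q j - 1)) 1)"
    by (rule sum_reindex_shift[OF fin, where sh = "\<lambda>p. p(j := p j + 1)" and sh' = "\<lambda>q. q(j := q j - 1)"
          and h = "\<lambda>p. W p * f p 1"])
      (auto simp: zero shift_int_face_in_ij_cells)
  moreover have "(\<Sum>p\<in>{p. int_face C i p}. W p * f p (-1)) = (\<Sum>q\<in>ij_cells C i j. W (q(j := q j + 1)) * f (q(j := q j + 1)) (-1))"
    by (rule sum_reindex_shift[OF fin, where sh = "\<lambda>p. p(j := p j - 1)" and sh' = "\<lambda>q. q(j := q j + 1)"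
          and h = "\<lambda>p. W p * f p (-1)"])
      (auto simp: zero shift_int_face_in_ij_cells[where t = "-1", simplified])
  ultimately show ?thesis by (simp add: sum.distrib distrib_left add.commute)
qed

lemma b_E_direction:
  fixes g :: "'n::finite \<Rightarrow> int \<Rightarrow> real" and C :: "('n \<Rightarrow> int) set"
  assumes sm: "\<forall>k. strict_mono (g k)" and finC: "finite C" and uH: "u \<in> H_E0 C"
    and zero: "\<And>p. \<not> int_face C i p \<Longrightarrow> W p = 0"
  shows "(\<Sum>p\<in>{p. int_face C i p}. W p * (\<Sum>s\<in>{-1, 1}. mflux g u i p j s * vstar upw g u i V p j s))
    = - (LINT x:Omega g C|lborel. recon g C i j (v_weight upw g u i j) V x
                                  * recon g C j i (u_weight g C u i j) (u j) x * eth g C i j W x)"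
proof -
  define Rv where "Rv q = v_weight upw g u i j q * V (q(j := q j - 1))
                          + (1 - v_weight upw g u i j q) * V (q(j := q j + 1))" for q
  define Ru where "Ru q = u_weight g C u i j q * u j (q(i := q i - 1))
                          + (1 - u_weight g C u i j q) * u j (q(i := q i + 1))" for q
  have "(\<Sum>p\<in>{p. int_face C i p}. W p * (\<Sum>s\<in>{-1, 1}. mflux g u i p j s * vstar upw g u i V p j s))
      = (\<Sum>q\<in>ij_cells C i j.
           W (q(j := q j - 1)) * (mflux g u i (q(j := q j - 1)) j 1 * vstar upw g u i V (q(j := q j - 1)) j 1)
         + W (q(j := q j + 1)) * (mflux g u i (q(j := q j + 1)) j (-1) * vstar upw g u i V (q(j := q j + 1)) j (-1)))"
    by (rule sum_int_faces_eq_sum_ij_cells[OF finC zero])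
  also have "\<dots> = (\<Sum>q\<in>ij_cells C i j. dual_flux g u i j q * Rv q * (W (q(j := q j - 1)) - W (q(j := q j + 1))))"
    unfolding Rv_def by (rule sum.cong[OF refl]) (rule flux_pair_dual_face[OF sm])
  also have "\<dots> = - (\<Sum>q\<in>ij_cells C i j. Rv q * Ru q * eth_val g C i j W q * dbox_meas g C q)"
    unfolding sum_negf[symmetric]
  proof (rule sum.cong[OF refl])
    fix q
    have "Rv q * Ru q * eth_val g C i j W q * dbox_meas g C q
        = Rv q * (Ru q * eth_val g C i j W q * dbox_meas g C q)"
      by (simp only: mult.assoc)
    also have "\<dots> = Rv q * (dual_flux g u i j q * (W (q(j := q j + 1)) - W (q(j := q j - 1))))"
      unfolding Ru_def dual_cell_balance[OF sm uH] ..
    finally show "dual_flux g u i j q * Rv q * (W (q(j := q j - 1)) - W (q(j := q j + 1)))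
        = - (Rv q * Ru q * eth_val g C i j W q * dbox_meas g C q)"
      by (simp add: algebra_simps)
  qed
  also have "(\<Sum>q\<in>ij_cells C i j. Rv q * Ru q * eth_val g C i j W q * dbox_meas g C q)
      = (LINT x:Omega g C|lborel. recon g C i j (v_weight upw g u i j) V x
                                  * recon g C j i (u_weight g C u i j) (u j) x * eth g C i j W x)"
    unfolding set_integral_recon_recon_eth[OF sm finC] Rv_def Ru_def ..
  finally show ?thesis .
qed

theorem lemma3p2:
  fixes g :: "'n::finite \<Rightarrow> int \<Rightarrow> real" and C :: "('n \<Rightarrow> int) set"
    and upw :: bool and i :: 'n and u :: "'n \<Rightarrow> ('n \<Rightarrow> int) \<Rightarrow> real"
  assumes "CARD('n) = 2 \<or> CARD('n) = 3"
    and "MAC_grid g C"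
    and "u \<in> H_E0 C"
  shows "\<exists>\<alpha>v \<alpha>u :: 'n \<Rightarrow> ('n \<Rightarrow> int) \<Rightarrow> real.
     (\<forall>j q. 0 \<le> \<alpha>v j q \<and> \<alpha>v j q \<le> 1) \<and> (\<forall>j q. 0 \<le> \<alpha>u j q \<and> \<alpha>u j q \<le> 1) \<and>
     (\<forall>v w. v \<in> H_E0 C \<longrightarrow> w \<in> H_E0 C \<longrightarrow>
        b_E upw g C i u (v i) (w i) =
          - (\<Sum>j\<in>UNIV. LINT x:Omega g C|lborel.
               recon g C i j (\<alpha>v j) (v i) x * recon g C j i (\<alpha>u j) (u j) x * eth g C i j (w i) x))"
proof -
  from assms(2) have finC: "finite C" and sm: "\<forall>k. strict_mono (g k)"
    by (auto simp: MAC_grid_def)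
  have "b_E upw g C i u (v i) (w i) =
      - (\<Sum>j\<in>UNIV. LINT x:Omega g C|lborel. recon g C i j (v_weight upw g u i j) (v i) x
                     * recon g C j i (u_weight g C u i j) (u j) x * eth g C i j (w i) x)"
    if "w \<in> H_E0 C" for v w
  proof -
    have zero: "\<And>p. \<not> int_face C i p \<Longrightarrow> w i p = 0" using that by (simp add: H_E0_def)
    have "b_E upw g C i u (v i) (w i) = (\<Sum>j\<in>UNIV. \<Sum>p\<in>{p. int_face C i p}.
        w i p * (\<Sum>s\<in>{-1, 1}. mflux g u i p j s * vstar upw g u i (v i) p j s))"
      unfolding b_E_def sum_distrib_left by (rule sum.swap)
    also have "\<dots> = (\<Sum>j\<in>UNIV. - (LINT x:Omega g C|lborel. recon g C i j (v_weight upw g u i j) (v i) x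
                     * recon g C j i (u_weight g C u i j) (u j) x * eth g C i j (w i) x))"
      by (rule sum.cong[OF refl]) (rule b_E_direction[OF sm finC assms(3) zero])
    finally show ?thesis by (simp add: sum_negf)
  qed
  moreover have "0 \<le> v_weight upw g u i j q \<and> v_weight upw g u i j q \<le> 1" for j q
    by (simp add: v_weight_def)
  moreover have "0 \<le> u_weight g C u i j q \<and> u_weight g C u i j q \<le> 1" for j q
    by (rule u_weight_balances(1)[OF sm assms(3)])
  ultimately show ?thesis
    by (intro exI[of _ "v_weight upw g u i"] exI[of _ "u_weight g C u i"]) blast
qed

end
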